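(* Let $g:\mathbb{R}^2\to\mathbb{R}^2$ be a $C^1$ map with $g(0)=0$, let $L>0$, and for $\delta>0$ let $\tilde S(\delta)=\{(x,y):|y|\le L|x|,\ |x|\le\delta\}$. Let $\tilde U=[-\alpha,\alpha]\times[-\beta,\beta]$ with $\alpha,\beta>0$ and $\beta/\alpha>L$. Let $\tilde v:[-1,1]\to\tilde U$ be continuous with $\tilde v(-1)\in\{y=-Lx\}$, $\tilde v(1)\in\{y=Lx\}$ and $\pi_x\tilde v(s)\neq0$ for all $s\in[-1,1]$. Assume that for every matrix $C\in[Dg(\tilde U)]$ and every $y$ with $|y|\le L$ we have $|\pi_x C(1,y)|>1$ and $|\pi_y C(1,y)|\le L$. Then for every $\delta>0$ there exist $p\in\tilde S(\delta)$ and an integer $n\ge0$ such that $g^k(p)\in\tilde U$ for $0\le k\le n$ and $g^n(p)\in\tilde v([-1,1])$.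
   Context: $\pi_x,\pi_y$ denote the projections of $\mathbb{R}^2$ onto the first and second coordinates. For a set $U\subset\mathbb{R}^2$, $[Dg(U)]$ denotes the interval enclosure of the derivative: the set of all $2\times2$ matrices $(a_{ij})$ with $a_{ij}\in[\inf_{p\in U}\partial g_i/\partial x_j(p),\ \sup_{p\in U}\partial g_i/\partial x_j(p)]$. *)

theory Defs
  imports "HOL-Analysis.Analysis"
begin

definition pix :: "real^2 \<Rightarrow> real" where "pix p = p $ 1"
definition piy :: "real^2 \<Rightarrow> real" where "piy p = p $ 2"

definition C1_map :: "(real^2 \<Rightarrow> real^2) \<Rightarrow> bool" where
  "C1_map g \<longleftrightarrow> (\<forall>p. g differentiable (at p)) \<and>
     (\<forall>i j. continuous_on UNIV (\<lambda>p. jacobian g (at p) $ i $ j))"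

definition interval_enclosure :: "(real^2 \<Rightarrow> real^2) \<Rightarrow> (real^2) set \<Rightarrow> (real^2^2) set" where
  "interval_enclosure g U = {C. \<forall>i j.
      (INF p\<in>U. jacobian g (at p) $ i $ j) \<le> C $ i $ j \<and>
      C $ i $ j \<le> (SUP p\<in>U. jacobian g (at p) $ i $ j)}"

definition S_tilde :: "real \<Rightarrow> real \<Rightarrow> (real^2) set" where
  "S_tilde L \<delta> = {p. \<bar>pix p\<bar> \<le> \<delta> \<and> \<bar>piy p\<bar> \<le> L * \<bar>pix p\<bar>}"

definition U_tilde :: "real \<Rightarrow> real \<Rightarrow> (real^2) set" where
  "U_tilde \<alpha> \<beta> = {p. \<bar>pix p\<bar> \<le> \<alpha> \<and> \<bar>piy p\<bar> \<le> \<beta>}"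

end

theory Submission
  imports Defs
begin

(* The cone condition on [Dg(U)], combined with the mean value theorem, shows that g maps
   differences in the cone |y| <= L |x| that lie in U to differences in the same cone and
   stretches their x-components by a uniform factor mu > 1.  Hence, while orbits stay in U,
   the image under g^j of a piece of the x-axis through 0 is a graph over the x-direction
   whose width grows like mu^j.  Stopping the piece where the graph first reaches |x| = alpha
   yields, for large j, a graph lying in the cone and spanning the whole width [-alpha, alpha]
   of U.  The curve v runs from the lower boundary line of the cone to the upper one, so it
   crosses this graph. *)

lemma pix_vector [simp]: "pix (vector [a, b]) = a"
  and piy_vector [simp]: "piy (vector [a, b]) = b"
  by (simp_all add: pix_def piy_def)

lemma pix_linear [simp]: "pix (p - q) = pix p - pix q" "pix 0 = 0"
  and piy_linear [simp]: "piy (p - q) = piy p - piy q" "piy 0 = 0"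
  by (simp_all add: pix_def piy_def)

lemma vec2_eqI: "pix p = pix q \<Longrightarrow> piy p = piy q \<Longrightarrow> p = (q::real^2)"
  by (simp add: vec_eq_iff forall_2 pix_def piy_def)

lemma pix_matrix_vector_mult: "pix ((M::real^2^2) *v d) = M$1$1 * pix d + M$1$2 * piy d"
  by (simp add: pix_def piy_def matrix_vector_mult_def sum_2)

definition horizontal_cone :: "real \<Rightarrow> (real^2) set" where
  "horizontal_cone L = {d. \<bar>piy d\<bar> \<le> L * \<bar>pix d\<bar>}"

lemma horizontal_cone_between_lines:
  assumes "d \<in> horizontal_cone L"
  shows "(piy d - L * pix d) * pix d \<le> 0" "0 \<le> (piy d + L * pix d) * pix d"
proof -
  have "\<bar>piy d * pix d\<bar> \<le> L * pix d * pix d"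
    using assms mult_right_mono[of "\<bar>piy d\<bar>" "L * \<bar>pix d\<bar>" "\<bar>pix d\<bar>"]
    by (simp add: horizontal_cone_def abs_mult mult.assoc)
  then show "(piy d - L * pix d) * pix d \<le> 0" "0 \<le> (piy d + L * pix d) * pix d"
    by (simp_all add: algebra_simps abs_le_iff)
qed

lemma horizontal_cone_in_U_tilde:
  "d \<in> horizontal_cone L \<Longrightarrow> \<bar>pix d\<bar> \<le> \<alpha> \<Longrightarrow> 0 \<le> L \<Longrightarrow> L * \<alpha> \<le> \<beta> \<Longrightarrow> d \<in> U_tilde \<alpha> \<beta>"
  unfolding horizontal_cone_def U_tilde_def
  by (smt (verit, best) mem_Collect_eq mult_left_mono)

lemma U_tilde_eq_cbox: "U_tilde \<alpha> \<beta> = cbox (vector [-\<alpha>, -\<beta>]) (vector [\<alpha>, \<beta>])"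
  by (auto simp: U_tilde_def mem_box_cart forall_2 pix_def piy_def abs_le_iff)

lemma vector_2_zero [simp]: "vector [0, 0] = (0::real^2)"
  by (simp add: vec_eq_iff forall_2)

lemma continuous_on_vector_2 [continuous_intros]:
  assumes "continuous_on S f" "continuous_on S h"
  shows "continuous_on S (\<lambda>t. vector [f t, h t] :: real^2)"
proof -
  have eq: "(\<lambda>t. vector [f t, h t] :: real^2) = (\<lambda>t. f t *\<^sub>R axis 1 1 + h t *\<^sub>R axis 2 1)"
    by (simp add: fun_eq_iff vec_eq_iff forall_2 axis_def)
  show ?thesis unfolding eq by (intro continuous_intros assms)
qed

section \<open>Mean values of the derivative\<close>

lemma mem_cbox_matrix:
  "(C::real^'n^'m) \<in> cbox A B \<longleftrightarrow> (\<forall>i j. A$i$j \<le> C$i$j \<and> C$i$j \<le> B$i$j)"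
  by (auto simp: mem_box Basis_vec_def inner_axis cart_eq_inner_axis[symmetric])

lemma interval_enclosure_eq_cbox:
  "interval_enclosure g U =
     cbox (\<chi> i j. INF p\<in>U. jacobian g (at p) $ i $ j) (\<chi> i j. SUP p\<in>U. jacobian g (at p) $ i $ j)"
  by (auto simp: interval_enclosure_def mem_cbox_matrix)

lemma uniform_expansion_rate:
  assumes "\<forall>C\<in>interval_enclosure g U. \<forall>y. \<bar>y\<bar> \<le> L \<longrightarrow> 1 < \<bar>pix (C *v vector [1, y])\<bar>"
  obtains \<mu> where "1 < \<mu>"
    "\<forall>C\<in>interval_enclosure g U. \<forall>y. \<bar>y\<bar> \<le> L \<longrightarrow> \<mu> \<le> \<bar>pix (C *v vector [1, y])\<bar>"
proof -
  define K where "K = interval_enclosure g U \<times> {-L..L}"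
  define f where "f z = \<bar>pix (fst z *v vector [1, snd z])\<bar>" for z :: "(real^2^2) \<times> real"
  have "compact K"
    unfolding K_def interval_enclosure_eq_cbox by (intro compact_Times compact_cbox compact_Icc)
  have "continuous_on K f"
    unfolding f_def pix_matrix_vector_mult pix_vector piy_vector by (intro continuous_intros)
  have f_gt_1: "1 < f z" if "z \<in> K" for z
    using assms that by (auto simp: K_def f_def)
  show ?thesis
  proof (cases "K = {}")
    case True
    then show ?thesis using that[of 2] by (fastforce simp: K_def abs_le_iff)
  next
    case False
    then obtain z where z: "z \<in> K" "\<forall>z'\<in>K. f z \<le> f z'"
      using continuous_attains_inf \<open>compact K\<close> \<open>continuous_on K f\<close> by blast
    show ?thesis
    proof (rule that)
      show "1 < f z" using f_gt_1 z(1) .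
      show "\<forall>C\<in>interval_enclosure g U. \<forall>y. \<bar>y\<bar> \<le> L \<longrightarrow> f z \<le> \<bar>pix (C *v vector [1, y])\<bar>"
        using z(2) by (auto simp: K_def f_def abs_le_iff)
    qed
  qed
qed

lemma mvt_component:
  fixes g :: "real^'n \<Rightarrow> real^'m"
  assumes diff: "\<forall>x. g differentiable (at x)"
  obtains \<xi> where "0 < \<xi>" "\<xi> < 1"
    "g (p + d) $ i - g p $ i = (jacobian g (at (p + \<xi> *\<^sub>R d)) *v d) $ i"
proof -
  have "((\<lambda>t. g (p + t *\<^sub>R d) $ i) has_derivative
          (\<lambda>h. (jacobian g (at (p + t *\<^sub>R d)) *v (h *\<^sub>R d)) $ i)) (at t within {0..1})" for t
  proof -
    have "(g has_derivative (\<lambda>h. jacobian g (at (p + t *\<^sub>R d)) *v h)) (at (p + t *\<^sub>R d))"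
      using diff jacobian_works by blast
    moreover have "((\<lambda>t. p + t *\<^sub>R d) has_derivative (\<lambda>h. h *\<^sub>R d)) (at t within {0..1})"
      by (auto intro!: derivative_eq_intros)
    ultimately have "((\<lambda>t. g (p + t *\<^sub>R d)) has_derivative
        (\<lambda>h. jacobian g (at (p + t *\<^sub>R d)) *v (h *\<^sub>R d))) (at t within {0..1})"
      using has_derivative_compose by blast
    then show ?thesis by (rule bounded_linear.has_derivative[OF bounded_linear_vec_nth])
  qed
  from mvt_simple[of 0 1 "\<lambda>t. g (p + t *\<^sub>R d) $ i", OF _ this] that show ?thesis
    by auto
qed

lemma C1_map_jacobian_bounded:
  assumes "C1_map g" "compact U"
  shows "bounded ((\<lambda>p. jacobian g (at p) $ i $ j) ` U)"
  using assms unfolding C1_map_def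
  by (meson compact_continuous_image compact_imp_bounded continuous_on_subset subset_UNIV)

lemma mean_value_interval_enclosure:
  assumes g: "C1_map g" and U: "compact U" "convex U" and pq: "p \<in> U" "q \<in> U"
  obtains M where "M \<in> interval_enclosure g U" "g q - g p = M *v (q - p)"
proof -
  have diff: "\<forall>x. g differentiable (at x)" using g by (simp add: C1_map_def)
  have "\<forall>i. \<exists>\<xi>. 0 < \<xi> \<and> \<xi> < 1 \<and>
          g q $ i - g p $ i = (jacobian g (at (p + \<xi> *\<^sub>R (q - p))) *v (q - p)) $ i"
  proof
    fix i
    obtain \<xi> where "0 < \<xi>" "\<xi> < 1"
      "g (p + (q - p)) $ i - g p $ i = (jacobian g (at (p + \<xi> *\<^sub>R (q - p))) *v (q - p)) $ i"
      by (rule mvt_component[OF diff])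
    then show "\<exists>\<xi>. 0 < \<xi> \<and> \<xi> < 1 \<and>
          g q $ i - g p $ i = (jacobian g (at (p + \<xi> *\<^sub>R (q - p))) *v (q - p)) $ i"
      by auto
  qed
  from choice[OF this] obtain \<xi> where \<xi>: "\<forall>i. 0 < \<xi> i \<and> \<xi> i < 1 \<and>
          g q $ i - g p $ i = (jacobian g (at (p + \<xi> i *\<^sub>R (q - p))) *v (q - p)) $ i"
    by blast
  define M where "M = (\<chi> i j. jacobian g (at (p + \<xi> i *\<^sub>R (q - p))) $ i $ j)"
  have on_segment: "p + \<xi> i *\<^sub>R (q - p) \<in> U" for i
    using convexD_alt[OF U(2) pq, of "\<xi> i"] \<xi> by (simp add: algebra_simps less_imp_le)
  show ?thesis
  proof
    show "M \<in> interval_enclosure g U"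
      unfolding interval_enclosure_def M_def
      using on_segment C1_map_jacobian_bounded[OF g U(1)]
      by (auto intro!: cINF_lower cSUP_upper bounded_imp_bdd_below bounded_imp_bdd_above)
    show "g q - g p = M *v (q - p)"
      using \<xi> by (simp add: vec_eq_iff M_def matrix_vector_mult_def)
  qed
qed

lemma matrix_expands_horizontal_cone:
  assumes M: "\<forall>y. \<bar>y\<bar> \<le> L \<longrightarrow>
      \<mu> \<le> \<bar>pix (M *v vector [1, y])\<bar> \<and> \<bar>piy (M *v vector [1, y])\<bar> \<le> L"
    and "1 \<le> \<mu>" and d: "d \<in> horizontal_cone L"
  shows "M *v d \<in> horizontal_cone L \<and> \<mu> * \<bar>pix d\<bar> \<le> \<bar>pix (M *v d)\<bar>"
proof (cases "pix d = 0")
  case True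
  then have "d = 0" using d by (intro vec2_eqI) (simp_all add: horizontal_cone_def)
  then show ?thesis by (simp add: horizontal_cone_def)
next
  case False
  define y where "y = piy d / pix d"
  have "\<bar>y\<bar> \<le> L" using d False by (simp add: horizontal_cone_def y_def abs_divide divide_le_eq)
  then have bounds: "\<mu> \<le> \<bar>pix (M *v vector [1, y])\<bar>" "\<bar>piy (M *v vector [1, y])\<bar> \<le> L"
    using M by auto
  have "d = pix d *\<^sub>R vector [1, y]"
    using False by (intro vec2_eqI) (simp_all add: y_def pix_def piy_def)
  then have Md: "M *v d = pix d *\<^sub>R (M *v vector [1, y])"
    by (metis matrix_vector_mult_scaleR)
  have "\<bar>piy (M *v d)\<bar> = \<bar>pix d\<bar> * \<bar>piy (M *v vector [1, y])\<bar>"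
    by (simp add: Md abs_mult piy_def)
  also have "\<dots> \<le> \<bar>pix d\<bar> * L"
    using bounds(2) by (simp add: mult_left_mono)
  also have "\<dots> \<le> \<bar>pix d\<bar> * L * \<bar>pix (M *v vector [1, y])\<bar>"
    using mult_left_mono[of 1 "\<bar>pix (M *v vector [1, y])\<bar>" "\<bar>pix d\<bar> * L"]
      bounds(1) \<open>1 \<le> \<mu>\<close> \<open>\<bar>y\<bar> \<le> L\<close> by simp
  also have "\<dots> = L * \<bar>pix (M *v d)\<bar>"
    by (simp add: Md abs_mult pix_def)
  finally have "M *v d \<in> horizontal_cone L" by (simp add: horizontal_cone_def)
  moreover have "\<mu> * \<bar>pix d\<bar> \<le> \<bar>pix (M *v d)\<bar>"
    using mult_right_mono[OF bounds(1), of "\<bar>pix d\<bar>"] by (simp add: Md abs_mult pix_def mult_ac)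
  ultimately show ?thesis ..
qed

lemma C1_map_expands_horizontal_cone:
  assumes "C1_map g" "1 \<le> \<mu>"
    and rate: "\<forall>C\<in>interval_enclosure g (U_tilde \<alpha> \<beta>). \<forall>y. \<bar>y\<bar> \<le> L \<longrightarrow>
      \<mu> \<le> \<bar>pix (C *v vector [1, y])\<bar> \<and> \<bar>piy (C *v vector [1, y])\<bar> \<le> L"
    and pq: "p \<in> U_tilde \<alpha> \<beta>" "q \<in> U_tilde \<alpha> \<beta>" and "q - p \<in> horizontal_cone L"
  shows "g q - g p \<in> horizontal_cone L \<and> \<mu> * \<bar>pix (q - p)\<bar> \<le> \<bar>pix (g q - g p)\<bar>"
proof -
  obtain M where M: "M \<in> interval_enclosure g (U_tilde \<alpha> \<beta>)" "g q - g p = M *v (q - p)"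
    using mean_value_interval_enclosure[OF assms(1) _ _ pq]
    by (auto simp: U_tilde_eq_cbox compact_cbox convex_box)
  have "M *v (q - p) \<in> horizontal_cone L \<and> \<mu> * \<bar>pix (q - p)\<bar> \<le> \<bar>pix (M *v (q - p))\<bar>"
    using M(1) rate \<open>1 \<le> \<mu>\<close> \<open>q - p \<in> horizontal_cone L\<close>
    by (intro matrix_expands_horizontal_cone) auto
  then show ?thesis using M(2) by simp
qed

section \<open>A curve crossing a graph in the cone\<close>

lemma abs_le_abs_endpoint_if_inj:
  fixes f :: "real \<Rightarrow> real"
  assumes "continuous_on (closed_segment a b) f" "inj_on f (closed_segment a b)"
    and "f a = 0" "t \<in> closed_segment a b"
  shows "\<bar>f t\<bar> \<le> \<bar>f b\<bar>"
proof -
  have "f t \<in> f ` closed_segment a b" using assms(4) by blast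
  then have "f t \<in> closed_segment 0 (f b)"
    using continuous_injective_image_segment_1[OF assms(1,2)] assms(3) by simp
  then show ?thesis by (auto simp: closed_segment_eq_real_ivl split: if_splits)
qed

lemma inj_segment_truncate:
  fixes f :: "real \<Rightarrow> real"
  assumes cont: "continuous_on (closed_segment 0 b) f" and inj: "inj_on f (closed_segment 0 b)"
    and "f 0 = 0" "0 \<le> \<alpha>"
  obtains c where "c \<in> closed_segment 0 b" "min \<alpha> \<bar>f b\<bar> \<le> \<bar>f c\<bar>"
    "\<forall>t\<in>closed_segment 0 c. \<bar>f t\<bar> \<le> \<alpha>"
proof -
  have below_end: "\<forall>t\<in>closed_segment 0 c. \<bar>f t\<bar> \<le> \<bar>f c\<bar>" if "c \<in> closed_segment 0 b" for c
  proof -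
    have "closed_segment 0 c \<subseteq> closed_segment 0 b"
      using that by (simp add: subset_closed_segment)
    then show ?thesis
      using abs_le_abs_endpoint_if_inj[of 0 c f] cont inj \<open>f 0 = 0\<close>
      by (meson continuous_on_subset inj_on_subset)
  qed
  show ?thesis
  proof (cases "\<bar>f b\<bar> \<le> \<alpha>")
    case True
    then show ?thesis using that[of b] below_end[of b] by fastforce
  next
    case False
    have "connected ((\<lambda>t. \<bar>f t\<bar>) ` closed_segment 0 b)"
      by (intro connected_continuous_image continuous_intros cont connected_segment)
    moreover have "0 \<in> (\<lambda>t. \<bar>f t\<bar>) ` closed_segment 0 b"
      by (rule image_eqI[where x = 0]) (simp_all add: \<open>f 0 = 0\<close>)
    moreover have "\<bar>f b\<bar> \<in> (\<lambda>t. \<bar>f t\<bar>) ` closed_segment 0 b"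
      by (rule image_eqI[where x = b]) simp_all
    ultimately have "{0..\<bar>f b\<bar>} \<subseteq> (\<lambda>t. \<bar>f t\<bar>) ` closed_segment 0 b"
      by (rule connected_contains_Icc)
    then obtain c where "c \<in> closed_segment 0 b" "\<bar>f c\<bar> = \<alpha>"
      using False \<open>0 \<le> \<alpha>\<close> by (auto simp: subset_iff)
    then show ?thesis using that[of c] below_end[of c] by simp
  qed
qed

lemma curve_meets_cone_graph:
  fixes A v :: "real \<Rightarrow> real^2"
  assumes A: "continuous_on {a..b} A" "inj_on (\<lambda>t. pix (A t)) {a..b}"
      "(\<lambda>t. pix (A t)) ` {a..b} = {-\<alpha>..\<alpha>}" "A ` {a..b} \<subseteq> horizontal_cone L"
    and v: "continuous_on {-1..1} v" "\<forall>s\<in>{-1..1}. \<bar>pix (v s)\<bar> \<le> \<alpha>"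
      "piy (v (-1)) = - L * pix (v (-1))" "piy (v 1) = L * pix (v 1)"
      "\<forall>s\<in>{-1..1}. pix (v s) \<noteq> 0"
  shows "\<exists>t\<in>{a..b}. \<exists>s\<in>{-1..1}. A t = v s"
proof -
  define X where "X = (\<lambda>t. pix (A t))"
  define \<rho> where "\<rho> = the_inv_into {a..b} X"
  have X_inj: "inj_on X {a..b}" and X_img: "X ` {a..b} = {-\<alpha>..\<alpha>}"
    using A(2,3) by (simp_all add: X_def)
  have \<rho>: "\<rho> x \<in> {a..b}" "X (\<rho> x) = x" if "x \<in> {-\<alpha>..\<alpha>}" for x
    using that X_img the_inv_into_into[OF X_inj _ order.refl, of x] f_the_inv_into_f[OF X_inj, of x]
    by (simp_all add: \<rho>_def)
  have "continuous_on {a..b} X"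
    unfolding X_def pix_def by (intro continuous_intros A(1))
  then have \<rho>_cont: "continuous_on {-\<alpha>..\<alpha>} \<rho>"
    using continuous_on_inv[of "{a..b}" X \<rho>] the_inv_into_f_f[OF X_inj] X_img by (simp add: \<rho>_def)
  have v_range: "pix (v s) \<in> {-\<alpha>..\<alpha>}" if "s \<in> {-1..1}" for s
    using v(2) that by (force simp: abs_le_iff)
  define w where "w s = A (\<rho> (pix (v s)))" for s
  have pix_w: "pix (w s) = pix (v s)" and w_cone: "w s \<in> horizontal_cone L"
    if "s \<in> {-1..1}" for s
    using \<rho>[OF v_range[OF that]] A(4) by (auto simp: w_def X_def)
  have "continuous_on {-1..1} (\<lambda>s. pix (v s))"
    unfolding pix_def by (intro continuous_intros v(1))
  then have "continuous_on {-1..1} (\<lambda>s. \<rho> (pix (v s)))"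
    by (rule continuous_on_compose2[OF \<rho>_cont]) (use v_range in auto)
  then have "continuous_on {-1..1} w"
    unfolding w_def by (rule continuous_on_compose2[OF A(1)]) (use \<rho> v_range in auto)
  \<comment> \<open>The factor \<open>pix (v s)\<close> makes the sign change of \<open>G\<close> independent of the side of
      the y-axis on which \<open>v\<close> lies.\<close>
  define G where "G s = (piy (v s) - piy (w s)) * pix (v s)" for s
  have "continuous_on {-1..1} G"
    unfolding G_def piy_def pix_def by (intro continuous_intros v(1) \<open>continuous_on {-1..1} w\<close>)
  moreover have "G (-1) \<le> 0" "0 \<le> G 1"
    using horizontal_cone_between_lines[OF w_cone, of "-1"] horizontal_cone_between_lines[OF w_cone, of 1]
      pix_w[of "-1"] pix_w[of 1] v(3,4)
    by (simp_all add: G_def algebra_simps)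
  ultimately obtain s where s: "s \<in> {-1..1}" "G s = 0"
    using IVT'[of G "-1" 0 1] by auto
  then have "v s = w s"
    using v(5) pix_w[OF s(1)] by (intro vec2_eqI) (auto simp: G_def)
  then show ?thesis
    using s(1) \<rho>(1)[OF v_range[OF s(1)]] unfolding w_def by (metis atLeastAtMost_iff)
qed

section \<open>Orbits of cone-expanding maps\<close>

locale cone_expanding =
  fixes g :: "real^2 \<Rightarrow> real^2" and L \<alpha> \<beta> \<mu> :: real
  assumes continuous_g: "continuous_on UNIV g"
    and g_0: "g 0 = 0"
    and L_nonneg: "0 \<le> L"
    and \<alpha>_pos: "0 < \<alpha>"
    and cone_fits: "L * \<alpha> \<le> \<beta>"
    and rate: "1 < \<mu>"
    and expands: "\<lbrakk>p \<in> U_tilde \<alpha> \<beta>; q \<in> U_tilde \<alpha> \<beta>; q - p \<in> horizontal_cone L\<rbrakk> \<Longrightarrow>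
       g q - g p \<in> horizontal_cone L \<and> \<mu> * \<bar>pix (q - p)\<bar> \<le> \<bar>pix (g q - g p)\<bar>"
begin

definition orbit_in_U :: "nat \<Rightarrow> real^2 \<Rightarrow> bool" where
  "orbit_in_U n p \<longleftrightarrow> (\<forall>k<n. (g ^^ k) p \<in> U_tilde \<alpha> \<beta>)"

lemma orbit_in_U_Suc: "orbit_in_U (Suc n) p \<longleftrightarrow> orbit_in_U n p \<and> (g ^^ n) p \<in> U_tilde \<alpha> \<beta>"
  by (auto simp: orbit_in_U_def less_Suc_eq)

declare g_0 [simp]

lemma funpow_g_0 [simp]: "(g ^^ k) 0 = 0"
  by (induction k) simp_all

lemma continuous_on_funpow_g [continuous_intros]:
  assumes "continuous_on S f"
  shows "continuous_on S (\<lambda>t. (g ^^ k) (f t))"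
proof -
  have "continuous_on UNIV (g ^^ k)"
    by (induction k) (auto intro: continuous_on_compose2[OF continuous_g])
  then show ?thesis
    using continuous_on_compose2 assms by blast
qed

lemma horizontal_vector_in_cone [simp]: "piy d = 0 \<Longrightarrow> d \<in> horizontal_cone L"
  using L_nonneg by (simp add: horizontal_cone_def)

lemma orbit_difference_expands:
  assumes "orbit_in_U k p" "orbit_in_U k q" "q - p \<in> horizontal_cone L"
  shows "(g ^^ k) q - (g ^^ k) p \<in> horizontal_cone L \<and>
    \<mu> ^ k * \<bar>pix (q - p)\<bar> \<le> \<bar>pix ((g ^^ k) q - (g ^^ k) p)\<bar>"
  using assms
proof (induction k)
  case (Suc k)
  then have IH: "(g ^^ k) q - (g ^^ k) p \<in> horizontal_cone L"
      "\<mu> ^ k * \<bar>pix (q - p)\<bar> \<le> \<bar>pix ((g ^^ k) q - (g ^^ k) p)\<bar>"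
    and U: "(g ^^ k) p \<in> U_tilde \<alpha> \<beta>" "(g ^^ k) q \<in> U_tilde \<alpha> \<beta>"
    by (simp_all add: orbit_in_U_Suc)
  have "\<mu> ^ Suc k * \<bar>pix (q - p)\<bar> \<le> \<mu> * \<bar>pix ((g ^^ k) q - (g ^^ k) p)\<bar>"
    using mult_left_mono[OF IH(2), of \<mu>] rate by simp
  then show ?case
    using expands[OF U IH(1)] by simp
qed simp

lemma orbit_in_U_0: "orbit_in_U n 0"
  using horizontal_cone_in_U_tilde[of 0 L \<alpha> \<beta>] L_nonneg \<alpha>_pos cone_fits
  by (simp add: orbit_in_U_def)

lemma orbit_in_cone:
  assumes "orbit_in_U k p" "p \<in> horizontal_cone L"
  shows "(g ^^ k) p \<in> horizontal_cone L"
  using orbit_difference_expands[of k 0 p] orbit_in_U_0 assms by simp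

lemma orbit_pix_grows:
  assumes "orbit_in_U (Suc k) p" "p \<in> horizontal_cone L"
  shows "\<mu> * \<bar>pix ((g ^^ k) p)\<bar> \<le> \<bar>pix ((g ^^ Suc k) p)\<bar>"
proof -
  have "(g ^^ k) p \<in> U_tilde \<alpha> \<beta>" "orbit_in_U k p"
    using assms(1) by (simp_all add: orbit_in_U_Suc)
  then show ?thesis
    using expands[of 0 "(g ^^ k) p"] orbit_in_U_0[of "Suc 0"] orbit_in_cone assms(2)
    by (simp add: orbit_in_U_def)
qed

lemma inj_on_pix_orbit:
  assumes "\<forall>t\<in>T. orbit_in_U k (vector [t, 0])"
  shows "inj_on (\<lambda>t. pix ((g ^^ k) (vector [t, 0]))) T"
proof (rule inj_onI)
  fix s t
  assume st: "s \<in> T" "t \<in> T"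
    and eq: "pix ((g ^^ k) (vector [s, 0])) = pix ((g ^^ k) (vector [t, 0]))"
  have "\<mu> ^ k * \<bar>t - s\<bar> \<le> 0"
    using orbit_difference_expands[of k "vector [s, 0]" "vector [t, 0]"] assms st eq by simp
  moreover have "0 < \<mu> ^ k" using rate by simp
  ultimately show "s = t" by (auto simp: mult_le_0_iff)
qed

lemma orbit_segment_stretches:
  assumes "\<bar>u\<bar> \<le> \<alpha>"
  shows "\<exists>b\<in>closed_segment 0 u. (\<forall>t\<in>closed_segment 0 b. orbit_in_U (Suc j) (vector [t, 0])) \<and>
           min \<alpha> (\<mu> ^ j * \<bar>u\<bar>) \<le> \<bar>pix ((g ^^ j) (vector [b, 0]))\<bar>"
proof (induction j)
  case 0
  have "orbit_in_U 1 (vector [t, 0])" if "t \<in> closed_segment 0 u" for t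
  proof -
    have "\<bar>t\<bar> \<le> \<alpha>"
      using that assms by (auto simp: closed_segment_eq_real_ivl split: if_splits)
    then show ?thesis
      using horizontal_cone_in_U_tilde[of "vector [t, 0]" L] L_nonneg cone_fits
      by (simp add: orbit_in_U_def)
  qed
  then show ?case by (intro bexI[of _ u]) auto
next
  case (Suc j)
  then obtain b where b: "b \<in> closed_segment 0 u"
      "\<forall>t\<in>closed_segment 0 b. orbit_in_U (Suc j) (vector [t, 0])"
      "min \<alpha> (\<mu> ^ j * \<bar>u\<bar>) \<le> \<bar>pix ((g ^^ j) (vector [b, 0]))\<bar>"
    by blast
  define X where "X = (\<lambda>t. pix ((g ^^ Suc j) (vector [t, 0])))"
  have "continuous_on (closed_segment 0 b) X"
    unfolding X_def pix_def by (intro continuous_intros)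
  moreover have "inj_on X (closed_segment 0 b)"
    unfolding X_def using b(2) by (intro inj_on_pix_orbit) blast
  moreover have "X 0 = 0" by (simp add: X_def)
  ultimately obtain c where c: "c \<in> closed_segment 0 b" "min \<alpha> \<bar>X b\<bar> \<le> \<bar>X c\<bar>"
      "\<forall>t\<in>closed_segment 0 c. \<bar>X t\<bar> \<le> \<alpha>"
    using inj_segment_truncate \<alpha>_pos less_imp_le by metis
  have "min \<alpha> (\<mu> * x) \<le> \<mu> * min \<alpha> x" if "0 \<le> x" for x
    using mult_right_mono[of 1 \<mu> \<alpha>] mult_right_mono[of 1 \<mu> x] rate \<alpha>_pos that
    by (auto simp: min_def)
  then have "min \<alpha> (\<mu> ^ Suc j * \<bar>u\<bar>) \<le> \<mu> * min \<alpha> (\<mu> ^ j * \<bar>u\<bar>)"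
    using rate by (simp add: mult.assoc)
  also have "\<dots> \<le> \<mu> * \<bar>pix ((g ^^ j) (vector [b, 0]))\<bar>"
    using b(3) rate by (intro mult_left_mono) simp_all
  also have "\<dots> \<le> \<bar>X b\<bar>"
    unfolding X_def using b(2) ends_in_segment(2) by (intro orbit_pix_grows) auto
  finally have "min \<alpha> (\<mu> ^ Suc j * \<bar>u\<bar>) \<le> \<bar>X c\<bar>"
    using c(2) by linarith
  moreover have "orbit_in_U (Suc (Suc j)) (vector [t, 0])" if t: "t \<in> closed_segment 0 c" for t
  proof -
    have "orbit_in_U (Suc j) (vector [t, 0])"
      using b(2) c(1) t by (meson subset_closed_segment ends_in_segment(1) subsetD)
    moreover have "(g ^^ Suc j) (vector [t, 0]) \<in> U_tilde \<alpha> \<beta>"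
      using horizontal_cone_in_U_tilde orbit_in_cone[OF calculation] c(3) t L_nonneg cone_fits
      by (simp add: X_def)
    ultimately show ?thesis by (simp add: orbit_in_U_Suc)
  qed
  moreover have "c \<in> closed_segment 0 u"
    using b(1) c(1) by (meson ends_in_segment(1) subset_closed_segment subsetD)
  ultimately show ?case by (auto simp: X_def)
qed

lemma orbit_graph_spans:
  assumes "0 < e" "e \<le> \<alpha>"
  obtains j a b where "-e \<le> a" "a \<le> 0" "0 \<le> b" "b \<le> e"
    "\<forall>t\<in>{a..b}. orbit_in_U (Suc j) (vector [t, 0])"
    "(\<lambda>t. pix ((g ^^ j) (vector [t, 0]))) ` {a..b} = {-\<alpha>..\<alpha>}"
proof -
  obtain j where "\<alpha> / e < \<mu> ^ j" using real_arch_pow[OF rate] by blast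
  then have j: "min \<alpha> (\<mu> ^ j * e) = \<alpha>"
    using assms(1) by (simp add: pos_divide_less_eq)
  obtain b where b: "b \<in> closed_segment 0 e"
      "\<forall>t\<in>closed_segment 0 b. orbit_in_U (Suc j) (vector [t, 0])"
      "\<alpha> \<le> \<bar>pix ((g ^^ j) (vector [b, 0]))\<bar>"
    using orbit_segment_stretches[of e j] assms j by auto
  obtain a where a: "a \<in> closed_segment 0 (-e)"
      "\<forall>t\<in>closed_segment 0 a. orbit_in_U (Suc j) (vector [t, 0])"
      "\<alpha> \<le> \<bar>pix ((g ^^ j) (vector [a, 0]))\<bar>"
    using orbit_segment_stretches[of "-e" j] assms j by auto
  have ab: "-e \<le> a" "a \<le> 0" "0 \<le> b" "b \<le> e"
    using a(1) b(1) assms(1) by (auto simp: closed_segment_eq_real_ivl)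
  have orbit: "\<forall>t\<in>{a..b}. orbit_in_U (Suc j) (vector [t, 0])"
    using a(2) b(2) ab by (auto simp: closed_segment_eq_real_ivl)
  define X where "X = (\<lambda>t. pix ((g ^^ j) (vector [t, 0])))"
  have X_inj: "inj_on X {a..b}"
    unfolding X_def using orbit by (intro inj_on_pix_orbit) (simp add: orbit_in_U_Suc)
  have X_le: "\<bar>X t\<bar> \<le> \<alpha>" if "t \<in> {a..b}" for t
    using orbit that by (simp add: X_def orbit_in_U_Suc U_tilde_def)
  have Xab: "\<bar>X a\<bar> = \<alpha>" "\<bar>X b\<bar> = \<alpha>"
    using X_le[of a] X_le[of b] a(3) b(3) ab by (simp_all add: X_def)
  then have "a \<noteq> b"
    using ab \<alpha>_pos by (auto simp: X_def)
  then have "X a \<noteq> X b"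
    using X_inj ab by (auto dest: inj_onD)
  then have X_a: "X a = - X b"
    using Xab abs_eq_iff[of "X a" "X b"] by simp
  have "continuous_on {a..b} X"
    unfolding X_def pix_def by (intro continuous_intros)
  then have "X ` {a..b} = closed_segment (X a) (X b)"
    using continuous_injective_image_segment_1[of a b X] X_inj ab
    by (simp add: closed_segment_eq_real_ivl)
  also have "\<dots> = {-\<alpha>..\<alpha>}"
    unfolding X_a using Xab(2) by (auto simp: closed_segment_eq_real_ivl abs_if)
  finally show ?thesis
    using that ab orbit by (simp add: X_def)
qed

lemma orbit_from_x_axis_meets_curve:
  fixes v :: "real \<Rightarrow> real^2"
  assumes v: "continuous_on {-1..1} v" "v ` {-1..1} \<subseteq> U_tilde \<alpha> \<beta>"
      "piy (v (-1)) = - L * pix (v (-1))" "piy (v 1) = L * pix (v 1)"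
      "\<forall>s\<in>{-1..1}. pix (v s) \<noteq> 0"
    and "0 < \<delta>"
  shows "\<exists>p n. p \<in> S_tilde L \<delta> \<and> (\<forall>k\<le>n. (g ^^ k) p \<in> U_tilde \<alpha> \<beta>) \<and> (g ^^ n) p \<in> v ` {-1..1}"
proof -
  have e: "0 < min \<delta> \<alpha>" "min \<delta> \<alpha> \<le> \<alpha>" using \<open>0 < \<delta>\<close> \<alpha>_pos by simp_all
  obtain j a b where ab: "-min \<delta> \<alpha> \<le> a" "a \<le> 0" "0 \<le> b" "b \<le> min \<delta> \<alpha>"
      and orbit: "\<forall>t\<in>{a..b}. orbit_in_U (Suc j) (vector [t, 0])"
      and spans: "(\<lambda>t. pix ((g ^^ j) (vector [t, 0]))) ` {a..b} = {-\<alpha>..\<alpha>}"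
    by (rule orbit_graph_spans[OF e])
  have orbit_j: "\<forall>t\<in>{a..b}. orbit_in_U j (vector [t, 0])"
    using orbit by (simp add: orbit_in_U_Suc)
  have "continuous_on {a..b} (\<lambda>t. (g ^^ j) (vector [t, 0]))"
    by (intro continuous_intros)
  moreover have "inj_on (\<lambda>t. pix ((g ^^ j) (vector [t, 0]))) {a..b}"
    using orbit_j by (rule inj_on_pix_orbit)
  moreover have "(\<lambda>t. (g ^^ j) (vector [t, 0])) ` {a..b} \<subseteq> horizontal_cone L"
    using orbit_j by (auto intro: orbit_in_cone)
  moreover have "\<forall>s\<in>{-1..1}. \<bar>pix (v s)\<bar> \<le> \<alpha>"
    using v(2) by (auto simp: U_tilde_def)
  ultimately obtain t s where ts: "t \<in> {a..b}" "s \<in> {-1..1}" "(g ^^ j) (vector [t, 0]) = v s"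
    using curve_meets_cone_graph[OF _ _ spans _ v(1) _ v(3-5)] by metis
  show ?thesis
  proof (intro exI conjI)
    show "vector [t, 0] \<in> S_tilde L \<delta>"
      using ts(1) ab L_nonneg by (auto simp: S_tilde_def)
    show "\<forall>k\<le>j. (g ^^ k) (vector [t, 0]) \<in> U_tilde \<alpha> \<beta>"
      using orbit ts(1) by (auto simp: orbit_in_U_def)
    show "(g ^^ j) (vector [t, 0]) \<in> v ` {-1..1}"
      using ts(2,3) by auto
  qed
qed

end

theorem mainTheorem17:
  fixes g :: "real^2 \<Rightarrow> real^2" and v :: "real \<Rightarrow> real^2"
    and L \<alpha> \<beta> :: real
  assumes "C1_map g" and "g 0 = 0" and "L > 0"
    and "\<alpha> > 0" and "\<beta> > 0" and "\<beta> / \<alpha> > L"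
    and "continuous_on {-1..1} v" and "v ` {-1..1} \<subseteq> U_tilde \<alpha> \<beta>"
    and "piy (v (-1)) = - L * pix (v (-1))" and "piy (v 1) = L * pix (v 1)"
    and "\<forall>s\<in>{-1..1}. pix (v s) \<noteq> 0"
    and "\<forall>C\<in>interval_enclosure g (U_tilde \<alpha> \<beta>). \<forall>y. \<bar>y\<bar> \<le> L \<longrightarrow>
           \<bar>pix (C *v vector [1, y])\<bar> > 1 \<and> \<bar>piy (C *v vector [1, y])\<bar> \<le> L"
  shows "\<forall>\<delta>>0. \<exists>p n. p \<in> S_tilde L \<delta> \<and> (\<forall>k\<le>(n::nat). (g ^^ k) p \<in> U_tilde \<alpha> \<beta>)
           \<and> (g ^^ n) p \<in> v ` {-1..1}"
proof -
  note enclosure = assms(12)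
  obtain \<mu> where \<mu>: "1 < \<mu>"
      "\<forall>C\<in>interval_enclosure g (U_tilde \<alpha> \<beta>). \<forall>y. \<bar>y\<bar> \<le> L \<longrightarrow> \<mu> \<le> \<bar>pix (C *v vector [1, y])\<bar>"
    using uniform_expansion_rate enclosure by blast
  have "\<forall>C\<in>interval_enclosure g (U_tilde \<alpha> \<beta>). \<forall>y. \<bar>y\<bar> \<le> L \<longrightarrow>
      \<mu> \<le> \<bar>pix (C *v vector [1, y])\<bar> \<and> \<bar>piy (C *v vector [1, y])\<bar> \<le> L"
    using \<mu>(2) enclosure by blast
  note expands = C1_map_expands_horizontal_cone[OF assms(1) less_imp_le[OF \<mu>(1)] this]
  have "continuous_on UNIV g"
    using assms(1) unfolding C1_map_def
    by (intro continuous_at_imp_continuous_on ballI differentiable_imp_continuous_within) auto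
  moreover have "L * \<alpha> \<le> \<beta>"
    using assms(4,6) by (simp add: less_divide_eq mult.commute)
  ultimately interpret cone_expanding g L \<alpha> \<beta> \<mu>
    using assms(2-4) \<mu>(1) expands by unfold_locales auto
  show ?thesis
    using orbit_from_x_axis_meets_curve[OF assms(7-11)] by blast
qed

end
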